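(* Let $0\le\underline{s}<\overline{s}\le1$, $p\in(0,1)$, $u,v>0$ with $u\ne v$, and fix $\varepsilon_0>0$ with $C_{\varepsilon_0}\ne\emptyset$. There exist $\underline{\lambda}>0$ and $\overline{\lambda}<+\infty$ such that for every $f\in F^\infty_{(\underline{s},\overline{s})}$: if $G_f(\lambda,0)=G_f(\lambda,c)=0$ for some $c\in C_{\varepsilon_0}$ and some $\lambda\in\mathcal{E}_0\cap\mathcal{E}_c\cap\big((0,\underline{\lambda})\cup(\overline{\lambda},+\infty)\big)$, then there exist $\underline{s}<z_1<z_2<\overline{s}$ with $f(s)=0$ for all $s\in[z_1,z_2]$.
   Context: $F^\infty_{(\underline{s},\overline{s})}=\{f\in L_\infty(\underline{s},\overline{s})\cap C^0(\underline{s},\overline{s}): \int_{\underline{s}}^{\overline{s}} f(s)\frac{1-2s}{s}ds=0,\ \int_{\underline{s}}^{\overline{s}} f=1,\ f\ge0,\ f(s)\frac{1-s}{s}\in L_\infty(\underline{s},\overline{s})\}$. For $\lambda>0$, $c\in(-1,u)\cap(-v,1)$: $m(\lambda,c)=\frac{\lambda(1+c)}{\lambda(1+c)+(u-c)}$, $mm(\lambda,c)=\frac{\lambda(1-c)}{\lambda(1-c)+(v+c)}$; $\mathcal{E}_c=\{\lambda>0: m(\lambda,c),mm(\lambda,c)\in(\underline{s},\overline{s})\}$. $C=\{c\in(-1,u)\cap(-v,1):\mathcal{E}_c\ne\emptyset\}\setminus\{0\}$, $C_{\varepsilon_0}=C\cap(-1+\varepsilon_0,u-\varepsilon_0)\cap(-v+\varepsilon_0,1-\varepsilon_0)$.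 $G_f(\lambda,c)=p\int_{\underline{s}}^{m(\lambda,c)} f(s)\frac{1-2s}{s}ds+(1-p)\int_{mm(\lambda,c)}^{\overline{s}} f(s)\frac{1-2s}{s}ds$. *)

theory Defs
  imports "HOL-Analysis.Analysis"
begin

text \<open>The class F^infty on (sl, sh): continuous on the open interval, essentially bounded
  (for continuous functions on an open interval: bounded), nonnegative, with f(s)(1-s)/s bounded,
  total mass 1 and vanishing first weighted moment.\<close>
definition Finf :: "real \<Rightarrow> real \<Rightarrow> (real \<Rightarrow> real) set" where
  "Finf sl sh = {f. continuous_on {sl<..<sh} f
      \<and> bounded (f ` {sl<..<sh})
      \<and> integral {sl..sh} (\<lambda>s. f s * (1 - 2 * s) / s) = (0::real)
      \<and> integral {sl..sh} (\<lambda>s. f s) = 1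
      \<and> (\<forall>s\<in>{sl<..<sh}. f s \<ge> 0)
      \<and> bounded ((\<lambda>s. f s * (1 - s) / s) ` {sl<..<sh})}"

definition mfun :: "real \<Rightarrow> real \<Rightarrow> real \<Rightarrow> real" where
  "mfun u lam c = lam * (1 + c) / (lam * (1 + c) + (u - c))"

definition mmfun :: "real \<Rightarrow> real \<Rightarrow> real \<Rightarrow> real" where
  "mmfun v lam c = lam * (1 - c) / (lam * (1 - c) + (v + c))"

definition Eset :: "real \<Rightarrow> real \<Rightarrow> real \<Rightarrow> real \<Rightarrow> real \<Rightarrow> real set" where
  "Eset sl sh u v c = {lam. lam > 0 \<and> mfun u lam c \<in> {sl<..<sh} \<and> mmfun v lam c \<in> {sl<..<sh}}"

definition Cset :: "real \<Rightarrow> real \<Rightarrow> real \<Rightarrow> real \<Rightarrow> real set" where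
  "Cset sl sh u v = {c. c \<in> {-1<..<u} \<inter> {-v<..<1} \<and> Eset sl sh u v c \<noteq> {}} - {0}"

definition Ceps :: "real \<Rightarrow> real \<Rightarrow> real \<Rightarrow> real \<Rightarrow> real \<Rightarrow> real set" where
  "Ceps sl sh u v e = Cset sl sh u v \<inter> {-1+e<..<u-e} \<inter> {-v+e<..<1-e}"

definition Gf :: "real \<Rightarrow> real \<Rightarrow> real \<Rightarrow> real \<Rightarrow> real \<Rightarrow> (real \<Rightarrow> real) \<Rightarrow> real \<Rightarrow> real \<Rightarrow> real" where
  "Gf sl sh u v p f lam c =
     p * integral {sl..mfun u lam c} (\<lambda>s. f s * (1 - 2 * s) / s)
     + (1 - p) * integral {mmfun v lam c..sh} (\<lambda>s. f s * (1 - 2 * s) / s)"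

end

theory Submission
  imports Defs
begin

(* Put h(s) = f(s) (1 - 2s) / s. Since m(lambda, c) increases and mm(lambda, c) decreases in c,
   G_f(lambda, c2) - G_f(lambda, c1) is p times the integral of h between the two m-points plus
   (1 - p) times its integral between the two mm-points. Writing
   m(lambda, c) = lambda / (lambda + (u - c) / (1 + c)), the point m lies left of 1/2 exactly when
   lambda is below (u - c) / (1 + c), a threshold bounded away from 0 and infinity uniformly in
   c \<in> C_eps0 \<union> {0}; likewise for mm. So for lambda very small (large) all four cut points lie
   left (right) of 1/2, where h has a constant sign, and unless f vanishes on a subinterval both
   integrals are nonzero of that sign: G_f(lambda, 0) = G_f(lambda, c) = 0 is then impossible. *)

lemma integrable_bounded_continuous_Ioo:
  fixes g :: "real \<Rightarrow> real"
  assumes cont: "continuous_on {a<..<b} g" and bdd: "bounded (g ` {a<..<b})"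
  shows "g integrable_on {a..b}"
proof -
  obtain B where B: "\<And>x. x \<in> {a<..<b} \<Longrightarrow> norm (g x) \<le> B"
    using bdd unfolding bounded_iff by blast
  have "g \<in> borel_measurable (lebesgue_on {a<..<b})"
    by (rule continuous_imp_measurable_on_sets_lebesgue[OF cont]) auto
  moreover have "(\<lambda>_. B) integrable_on {a<..<b}"
    using integrable_on_Icc_iff_Ioo integrable_const_ivl by blast
  ultimately have "g absolutely_integrable_on {a<..<b}"
    using B by (intro measurable_bounded_by_integrable_imp_absolutely_integrable) auto
  then show ?thesis
    using integrable_on_Icc_iff_Ioo set_lebesgue_integral_eq_integral(1) by blast
qed

lemma Finf_moment_integrable:
  assumes f: "f \<in> Finf sl sh" and "0 \<le> sl"
  shows "(\<lambda>s. f s * (1 - 2 * s) / s) integrable_on {sl..sh}"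
proof (rule integrable_bounded_continuous_Ioo)
  have cf: "continuous_on {sl<..<sh} f" and b1: "bounded (f ` {sl<..<sh})"
    and b2: "bounded ((\<lambda>s. f s * (1 - s) / s) ` {sl<..<sh})"
    using f unfolding Finf_def by auto
  show "continuous_on {sl<..<sh} (\<lambda>s. f s * (1 - 2 * s) / s)"
    by (intro continuous_intros cf) (use \<open>0 \<le> sl\<close> in auto)
  have "(\<lambda>s. f s * (1 - 2 * s) / s) ` {sl<..<sh} = (\<lambda>s. f s * (1 - s) / s - f s) ` {sl<..<sh}"
    using \<open>0 \<le> sl\<close> by (intro image_cong) (auto simp: field_simps)
  then show "bounded ((\<lambda>s. f s * (1 - 2 * s) / s) ` {sl<..<sh})"
    using bounded_minus_comp[OF b2 b1] by simp
qed

lemma integral_pos_if_pos_somewhere: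
  fixes g :: "real \<Rightarrow> real"
  assumes "continuous_on {x..y} g" "x < y" "\<And>s. s \<in> {x..y} \<Longrightarrow> g s \<ge> 0"
    and "t \<in> {x..y}" "g t > 0"
  shows "integral {x..y} g > 0"
proof -
  have "integral {x..y} g \<ge> 0"
    using assms integrable_continuous_interval by (intro integral_nonneg) auto
  moreover have "integral {x..y} g \<noteq> 0"
    using integral_eq_0_iff[OF assms(1-3)] assms(4,5) by force
  ultimately show ?thesis by linarith
qed

definition vanishes_on_subinterval :: "(real \<Rightarrow> real) \<Rightarrow> real \<Rightarrow> real \<Rightarrow> bool" where
  "vanishes_on_subinterval f a b \<longleftrightarrow> (\<exists>z1 z2. a < z1 \<and> z1 < z2 \<and> z2 < b \<and> (\<forall>s \<in> {z1..z2}. f s = 0))"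

lemma integral_weighted_pos:
  fixes f w :: "real \<Rightarrow> real"
  assumes cf: "continuous_on {sl<..<sh} f" and f_nonneg: "\<And>s. s \<in> {sl<..<sh} \<Longrightarrow> f s \<ge> 0"
    and nv: "\<not> vanishes_on_subinterval f sl sh"
    and xy: "sl < x" "x < y" "y < sh"
    and cw: "continuous_on {x..y} w" and w_nonneg: "\<And>s. s \<in> {x..y} \<Longrightarrow> w s \<ge> 0"
    and w_pos: "\<And>s. s \<in> {x<..<y} \<Longrightarrow> w s > 0"
  shows "integral {x..y} (\<lambda>s. f s * w s) > 0"
proof -
  define x' y' where "x' = (2 * x + y) / 3" and "y' = (x + 2 * y) / 3"
  have "sl < x'" "x' < y'" "y' < sh" using xy unfolding x'_def y'_def by auto
  then obtain t where t: "t \<in> {x'..y'}" "f t \<noteq> 0"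
    using nv unfolding vanishes_on_subinterval_def by blast
  have t_in: "t \<in> {x<..<y}" using t xy unfolding x'_def y'_def by auto
  then have "f t > 0" using f_nonneg[of t] t xy by auto
  then have "f t * w t > 0" using w_pos[OF t_in] by simp
  moreover have "continuous_on {x..y} (\<lambda>s. f s * w s)"
    using xy by (intro continuous_intros cw continuous_on_subset[OF cf]) auto
  ultimately show ?thesis
    using xy t_in f_nonneg w_nonneg by (intro integral_pos_if_pos_somewhere[where t = t]) auto
qed

lemma Finf_moment_integral_pos:
  assumes f: "f \<in> Finf sl sh" and "0 \<le> sl" and nv: "\<not> vanishes_on_subinterval f sl sh"
    and "sl < x" "x < y" "y < sh" "y \<le> 1/2"
  shows "integral {x..y} (\<lambda>s. f s * (1 - 2 * s) / s) > 0"
proof -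
  have "integral {x..y} (\<lambda>s. f s * ((1 - 2 * s) / s)) > 0"
    using assms unfolding Finf_def
    by (intro integral_weighted_pos[OF _ _ nv]) (auto intro!: continuous_intros)
  then show ?thesis by simp
qed

lemma Finf_moment_integral_neg:
  assumes f: "f \<in> Finf sl sh" and "0 \<le> sl" and nv: "\<not> vanishes_on_subinterval f sl sh"
    and "sl < x" "x < y" "y < sh" "1/2 \<le> x"
  shows "integral {x..y} (\<lambda>s. f s * (1 - 2 * s) / s) < 0"
proof -
  have "integral {x..y} (\<lambda>s. f s * ((2 * s - 1) / s)) > 0"
    using assms unfolding Finf_def
    by (intro integral_weighted_pos[OF _ _ nv]) (auto intro!: continuous_intros)
  moreover have "(\<lambda>s. f s * ((2 * s - 1) / s)) = (\<lambda>s. - (f s * (1 - 2 * s) / s))"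
    by (auto simp: fun_eq_iff diff_divide_distrib algebra_simps)
  ultimately show ?thesis by simp
qed

definition half_crossing :: "real \<Rightarrow> real \<Rightarrow> real" where
  "half_crossing u c = (u - c) / (1 + c)"

lemma mfun_eq_half_crossing:
  assumes "c \<noteq> -1"
  shows "mfun u lam c = lam / (lam + half_crossing u c)"
proof -
  have "1 + c \<noteq> 0" using assms by auto
  then show ?thesis unfolding mfun_def half_crossing_def by (simp add: field_simps)
qed

lemma mmfun_eq_mfun_neg: "mmfun v lam c = mfun v lam (- c)"
  unfolding mfun_def mmfun_def by simp

lemma half_crossing_pos: "-1 < c \<Longrightarrow> c < u \<Longrightarrow> half_crossing u c > 0"
  unfolding half_crossing_def by simp

lemma half_crossing_strict_antimono:
  assumes "-1 < c1" "c1 < c2" "c2 < u"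
  shows "half_crossing u c2 < half_crossing u c1"
proof -
  have "half_crossing u c = (1 + u) / (1 + c) - 1" if "-1 < c" for c
    using that unfolding half_crossing_def by (simp add: field_simps)
  moreover have "(1 + u) / (1 + c2) < (1 + u) / (1 + c1)"
    using assms by (intro divide_strict_left_mono) auto
  ultimately show ?thesis using assms by simp
qed

lemma mfun_le_half_iff:
  assumes "lam > 0" "-1 < c" "c < u"
  shows "mfun u lam c \<le> 1/2 \<longleftrightarrow> lam \<le> half_crossing u c"
  using assms half_crossing_pos[OF assms(2,3)] by (simp add: mfun_eq_half_crossing field_simps)

lemma half_le_mfun_iff:
  assumes "lam > 0" "-1 < c" "c < u"
  shows "1/2 \<le> mfun u lam c \<longleftrightarrow> half_crossing u c \<le> lam"
  using assms half_crossing_pos[OF assms(2,3)] by (simp add: mfun_eq_half_crossing field_simps)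

lemma mfun_strict_mono:
  assumes "lam > 0" "-1 < c1" "c1 < c2" "c2 < u"
  shows "mfun u lam c1 < mfun u lam c2"
proof -
  have "lam / (lam + half_crossing u c1) < lam / (lam + half_crossing u c2)"
    using assms half_crossing_strict_antimono[OF assms(2-4)] half_crossing_pos[of c2 u]
    by (intro divide_strict_left_mono) auto
  then show ?thesis using assms by (simp add: mfun_eq_half_crossing)
qed

lemma half_crossing_bounds:
  assumes "e > 0" "-1 + e < c" "c < u - e" "c < 1 - e"
  shows "e / 2 < half_crossing u c" "half_crossing u c < (u + 1) / e"
proof -
  have "e / 2 < (u - c) / 2" using assms by simp
  also have "\<dots> < (u - c) / (1 + c)" using assms by (intro divide_strict_left_mono) auto
  finally show "e / 2 < half_crossing u c" unfolding half_crossing_def .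
  have "(u - c) / (1 + c) < (u + 1) / (1 + c)" using assms by (intro divide_strict_right_mono) auto
  also have "\<dots> < (u + 1) / e" using assms by (intro divide_strict_left_mono) auto
  finally show "half_crossing u c < (u + 1) / e" unfolding half_crossing_def .
qed

definition on_one_side_of_half :: "real \<Rightarrow> real \<Rightarrow> real \<Rightarrow> real set \<Rightarrow> bool" where
  "on_one_side_of_half u v lam C \<longleftrightarrow>
     (\<forall>c\<in>C. mfun u lam c \<le> 1/2 \<and> mmfun v lam c \<le> 1/2) \<or>
     (\<forall>c\<in>C. 1/2 \<le> mfun u lam c \<and> 1/2 \<le> mmfun v lam c)"

lemma on_one_side_of_half_outside_thresholds:
  assumes "u > 0" "v > 0" "e > 0" "c \<in> Ceps sl sh u v e" "lam > 0"
    and "lam < min (e / 2) (min u v) \<or> max (max u v) ((max u v + 1) / e) < lam"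
  shows "on_one_side_of_half u v lam {0, c}"
proof -
  have c: "-1 + e < c" "c < u - e" "-v + e < c" "c < 1 - e"
    using assms(4) unfolding Ceps_def Cset_def by auto
  have hu: "e / 2 < half_crossing u c" "half_crossing u c < (u + 1) / e"
    using half_crossing_bounds[OF \<open>e > 0\<close>] c by auto
  have hv: "e / 2 < half_crossing v (- c)" "half_crossing v (- c) < (v + 1) / e"
    using half_crossing_bounds[OF \<open>e > 0\<close>, of "- c" v] c by auto
  have max_bounds: "(u + 1) / e \<le> (max u v + 1) / e" "(v + 1) / e \<le> (max u v + 1) / e"
    using \<open>e > 0\<close> by (auto intro!: divide_right_mono)
  have at_0: "half_crossing u 0 = u" "half_crossing v (- 0) = v"
    unfolding half_crossing_def by simp_all
  have range: "-1 < x \<and> x < u \<and> -1 < - x \<and> - x < v" if "x \<in> {0, c}" for x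
    using that c assms(1-3) by auto
  show ?thesis
  proof (cases "lam < min (e / 2) (min u v)")
    case True
    have "mfun u lam x \<le> 1/2 \<and> mmfun v lam x \<le> 1/2" if "x \<in> {0, c}" for x
    proof -
      have "lam \<le> half_crossing u x" "lam \<le> half_crossing v (- x)"
        using that True hu hv at_0 by auto
      then show ?thesis
        using range[OF that] mfun_le_half_iff[OF \<open>lam > 0\<close>, of x u]
          mfun_le_half_iff[OF \<open>lam > 0\<close>, of "- x" v]
        by (auto simp: mmfun_eq_mfun_neg)
    qed
    then show ?thesis unfolding on_one_side_of_half_def by blast
  next
    case False
    then have large: "max (max u v) ((max u v + 1) / e) < lam" using assms(6) by auto
    have "1/2 \<le> mfun u lam x \<and> 1/2 \<le> mmfun v lam x" if "x \<in> {0, c}" for x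
    proof -
      have "half_crossing u x \<le> lam" "half_crossing v (- x) \<le> lam"
        using that large hu hv at_0 max_bounds by auto
      then show ?thesis
        using range[OF that] half_le_mfun_iff[OF \<open>lam > 0\<close>, of x u]
          half_le_mfun_iff[OF \<open>lam > 0\<close>, of "- x" v]
        by (auto simp: mmfun_eq_mfun_neg)
    qed
    then show ?thesis unfolding on_one_side_of_half_def by blast
  qed
qed

lemma Gf_diff:
  fixes f :: "real \<Rightarrow> real"
  assumes int: "(\<lambda>s. f s * (1 - 2 * s) / s) integrable_on {sl..sh}"
    and "sl \<le> mfun u lam c1" "mfun u lam c1 \<le> mfun u lam c2" "mfun u lam c2 \<le> sh"
    and "sl \<le> mmfun v lam c2" "mmfun v lam c2 \<le> mmfun v lam c1" "mmfun v lam c1 \<le> sh"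
  shows "Gf sl sh u v p f lam c2 - Gf sl sh u v p f lam c1 =
    p * integral {mfun u lam c1..mfun u lam c2} (\<lambda>s. f s * (1 - 2 * s) / s)
    + (1 - p) * integral {mmfun v lam c2..mmfun v lam c1} (\<lambda>s. f s * (1 - 2 * s) / s)"
proof -
  have split: "integral {a..c} g = integral {a..b} g + integral {b..c} g"
    if "g integrable_on {sl..sh}" "sl \<le> a" "a \<le> b" "b \<le> c" "c \<le> sh" for g :: "real \<Rightarrow> real" and a b c
    using that integrable_subinterval_real[OF that(1), of a c]
    by (intro Henstock_Kurzweil_Integration.integral_combine[symmetric]) auto
  have "integral {sl..mfun u lam c2} (\<lambda>s. f s * (1 - 2 * s) / s) =
      integral {sl..mfun u lam c1} (\<lambda>s. f s * (1 - 2 * s) / s)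
      + integral {mfun u lam c1..mfun u lam c2} (\<lambda>s. f s * (1 - 2 * s) / s)"
    using assms by (intro split[OF int]) auto
  moreover have "integral {mmfun v lam c2..sh} (\<lambda>s. f s * (1 - 2 * s) / s) =
      integral {mmfun v lam c2..mmfun v lam c1} (\<lambda>s. f s * (1 - 2 * s) / s)
      + integral {mmfun v lam c1..sh} (\<lambda>s. f s * (1 - 2 * s) / s)"
    using assms by (intro split[OF int]) auto
  ultimately show ?thesis
    unfolding Gf_def by (simp add: algebra_simps)
qed

lemma Gf_zeros_imp_vanishes:
  assumes f: "f \<in> Finf sl sh" and "0 \<le> sl" and "0 < p" "p < 1"
    and "-1 < c1" "c1 < c2" "c2 < u" "-v < c1" "c2 < 1"
    and E: "lam \<in> Eset sl sh u v c1" "lam \<in> Eset sl sh u v c2"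
    and G: "Gf sl sh u v p f lam c1 = 0" "Gf sl sh u v p f lam c2 = 0"
    and side: "on_one_side_of_half u v lam {c1, c2}"
  shows "vanishes_on_subinterval f sl sh"
proof (rule ccontr)
  assume nv: "\<not> vanishes_on_subinterval f sl sh"
  define h where "h = (\<lambda>s. f s * (1 - 2 * s) / s)"
  define a1 where "a1 = mfun u lam c1"
  define a2 where "a2 = mfun u lam c2"
  define b1 where "b1 = mmfun v lam c1"
  define b2 where "b2 = mmfun v lam c2"
  have "lam > 0" and pts: "a1 \<in> {sl<..<sh}" "a2 \<in> {sl<..<sh}" "b1 \<in> {sl<..<sh}" "b2 \<in> {sl<..<sh}"
    using E unfolding Eset_def a1_def a2_def b1_def b2_def by auto
  have "a1 < a2"
    unfolding a1_def a2_def using assms \<open>lam > 0\<close> by (intro mfun_strict_mono) auto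
  moreover have "b2 < b1"
    unfolding b1_def b2_def mmfun_eq_mfun_neg using assms \<open>lam > 0\<close> by (intro mfun_strict_mono) auto
  ultimately have sum0: "p * integral {a1..a2} h + (1 - p) * integral {b2..b1} h = 0"
    using Gf_diff[OF Finf_moment_integrable[OF f \<open>0 \<le> sl\<close>], of u lam c1 c2 v p] G pts
    unfolding a1_def a2_def b1_def b2_def h_def by auto
  note pos = Finf_moment_integral_pos[OF f \<open>0 \<le> sl\<close> nv, folded h_def]
  note neg = Finf_moment_integral_neg[OF f \<open>0 \<le> sl\<close> nv, folded h_def]
  have "(integral {a1..a2} h > 0 \<and> integral {b2..b1} h > 0) \<or>
      (integral {a1..a2} h < 0 \<and> integral {b2..b1} h < 0)"
    using side pos[of a1 a2] pos[of b2 b1] neg[of a1 a2] neg[of b2 b1] pts \<open>a1 < a2\<close> \<open>b2 < b1\<close>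
    unfolding on_one_side_of_half_def a1_def a2_def b1_def b2_def by auto
  then show False
    using sum0 \<open>0 < p\<close> \<open>p < 1\<close> by (smt (verit) mult_pos_pos mult_pos_neg)
qed

theorem proposition10:
  fixes sl sh p u v e0 :: real
  assumes "0 \<le> sl" "sl < sh" "sh \<le> 1"
    and "0 < p" "p < 1"
    and "u > 0" "v > 0" "u \<noteq> v"
    and "e0 > 0" "Ceps sl sh u v e0 \<noteq> {}"
  shows "\<exists>lam_lo lam_hi :: real. lam_lo > 0 \<and>
    (\<forall>f \<in> Finf sl sh. \<forall>c \<in> Ceps sl sh u v e0. \<forall>lam.
       lam \<in> Eset sl sh u v 0 \<inter> Eset sl sh u v c \<inter> ({0<..<lam_lo} \<union> {lam_hi<..}) \<and>
       Gf sl sh u v p f lam 0 = 0 \<and> Gf sl sh u v p f lam c = 0 \<longrightarrow>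
       (\<exists>z1 z2. sl < z1 \<and> z1 < z2 \<and> z2 < sh \<and> (\<forall>s \<in> {z1..z2}. f s = 0)))"
proof -
  define lo where "lo = min (e0 / 2) (min u v)"
  define hi where "hi = max (max u v) ((max u v + 1) / e0)"
  have "vanishes_on_subinterval f sl sh"
    if f: "f \<in> Finf sl sh" and c: "c \<in> Ceps sl sh u v e0"
      and lam: "lam \<in> Eset sl sh u v 0 \<inter> Eset sl sh u v c \<inter> ({0<..<lo} \<union> {hi<..})"
      and G: "Gf sl sh u v p f lam 0 = 0" "Gf sl sh u v p f lam c = 0" for f c lam
  proof -
    have c_range: "-1 < c" "c < u" "-v < c" "c < 1" "c \<noteq> 0"
      using c unfolding Ceps_def Cset_def by auto
    have side: "on_one_side_of_half u v lam {0, c}"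
      using lam assms by (intro on_one_side_of_half_outside_thresholds[OF _ _ _ c])
        (auto simp: lo_def hi_def Eset_def)
    show ?thesis
    proof (cases "c < 0")
      case True
      then show ?thesis
        using Gf_zeros_imp_vanishes[OF f \<open>0 \<le> sl\<close> \<open>0 < p\<close> \<open>p < 1\<close>, of c 0 u v lam] c_range lam G side assms
        by (simp add: insert_commute)
    next
      case False
      then show ?thesis
        using Gf_zeros_imp_vanishes[OF f \<open>0 \<le> sl\<close> \<open>0 < p\<close> \<open>p < 1\<close>, of 0 c u v lam] c_range lam G side assms
        by simp
    qed
  qed
  moreover have "lo > 0" using assms unfolding lo_def by simp
  ultimately show ?thesis unfolding vanishes_on_subinterval_def by blast
qed

end
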